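(* Let $X$ be any topological space. Every prime ideal of $B_1(X)$ is contained in a unique maximal ideal of $B_1(X)$; that is, $B_1(X)$ is a Gelfand ring.
   Context: For a topological space $X$, $B_1(X)$ denotes the commutative ring with unity (pointwise operations) of all Baire one functions $f:X\to\mathbb{R}$, i.e. pointwise limits of sequences of continuous real-valued functions on $X$. *)

theory Defs
  imports "HOL-Analysis.Analysis" "HOL-Algebra.Ideal"
begin

text \<open>Functions are normalised to be 0 outside topspace X (extensional representation).\<close>

definition baire_one :: "'a topology \<Rightarrow> ('a \<Rightarrow> real) set" where
  "baire_one X = {f. (\<forall>x. x \<notin> topspace X \<longrightarrow> f x = 0) \<and>
     (\<exists>g::nat \<Rightarrow> 'a \<Rightarrow> real. (\<forall>n. continuous_map X euclideanreal (g n)) \<and>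
        (\<forall>x\<in>topspace X. LIMSEQ (\<lambda>n. g n x) (f x)))}"

definition B1_ring :: "'a topology \<Rightarrow> ('a \<Rightarrow> real) ring" where
  "B1_ring X = \<lparr> carrier = baire_one X,
                 mult = (\<lambda>f g x. f x * g x),
                 one = (\<lambda>x. if x \<in> topspace X then 1 else 0),
                 zero = (\<lambda>x. 0),
                 add = (\<lambda>f g x. f x + g x) \<rparr>"

end

theory Submission
  imports Defs "HOL-Algebra.Ring_Divisibility"
begin

text \<open>If a prime ideal \<open>P\<close> lay in distinct maximal ideals \<open>M\<close> and \<open>N\<close>, write \<open>1 = u + v\<close> with
\<open>u \<in> M\<close>, \<open>v \<in> N\<close>. The Baire one functions \<open>f = max 0 (1/3 - u)\<close> and \<open>g = max 0 (1/3 - v)\<close>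
have product 0, because \<open>u\<close> and \<open>v\<close> are never both below 1/3; so \<open>f\<close> or \<open>g\<close> lies in \<open>P\<close>.
But \<open>f \<notin> M\<close>, since otherwise \<open>u\<^sup>2 + f \<ge> 1/9\<close> would lie in \<open>M\<close>, and a Baire one function
bounded below by a positive constant is a unit (composing with \<open>t \<mapsto> 1/t\<close> keeps it Baire one).
Likewise \<open>g \<notin> N\<close>.\<close>

lemma (in ring) exists_maximalideal_superset:
  assumes "ideal I R" "I \<noteq> carrier R"
  shows "\<exists>M. maximalideal M R \<and> I \<subseteq> M"
proof -
  define A where "A = {J. ideal J R \<and> I \<subseteq> J \<and> \<one> \<notin> J}"
  have "I \<in> A"
    using assms ideal.one_imp_carrier unfolding A_def by blast
  moreover have "\<Union>C \<in> A" if "C \<noteq> {}" "subset.chain A C" for C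
  proof -
    have "subset.chain {J. ideal J R} C"
      using that(2) unfolding A_def pred_on.chain_def by blast
    then have "ideal (\<Union>C) R"
      using chain_Union_is_ideal that(1) by presburger
    moreover have "C \<subseteq> A"
      using that(2) unfolding pred_on.chain_def by blast
    ultimately show ?thesis
      using that(1) unfolding A_def by blast
  qed
  ultimately obtain M where M: "M \<in> A" "\<forall>J\<in>A. M \<subseteq> J \<longrightarrow> J = M"
    using subset_Zorn_nonempty[of A] by blast
  have "maximalideal M R"
  proof (rule maximalidealI)
    show "ideal M R" "carrier R \<noteq> M"
      using M unfolding A_def by blast+
    fix J assume "ideal J R" "M \<subseteq> J" "J \<subseteq> carrier R"
    then show "J = M \<or> J = carrier R"
      using M ideal.one_imp_carrier unfolding A_def by blast
  qed
  with M show ?thesis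
    unfolding A_def by blast
qed

lemma (in ring) distinct_maximalideals_comaximal:
  assumes M: "maximalideal M R" and N: "maximalideal N R" and "M \<noteq> N"
  shows "\<exists>u\<in>M. \<exists>v\<in>N. \<one> = u \<oplus> v"
proof -
  have ideals: "ideal M R" "ideal N R"
    using M N maximalideal.axioms(1) by blast+
  have sum_ideal: "ideal (M <+>\<^bsub>R\<^esub> N) R"
    using add_ideals[OF ideals] .
  have sum_sup: "M \<union> N \<subseteq> M <+>\<^bsub>R\<^esub> N"
    using union_genideal[OF ideals] genideal_self ideals ideal.Icarr by (metis Un_subset_iff subsetI)
  moreover have "M <+>\<^bsub>R\<^esub> N \<subseteq> carrier R"
    using ideal.Icarr[OF sum_ideal] by blast
  ultimately have "M <+>\<^bsub>R\<^esub> N = M \<or> M <+>\<^bsub>R\<^esub> N = carrier R"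
    using maximalideal.I_maximal[OF M sum_ideal] by blast
  moreover have "M <+>\<^bsub>R\<^esub> N \<noteq> M"
  proof
    assume "M <+>\<^bsub>R\<^esub> N = M"
    with sum_sup have "N \<subseteq> M" by blast
    then show False
      using maximalideal.I_maximal[OF N ideals(1)] maximalideal.I_notcarr[OF M]
        ideal.Icarr[OF ideals(1)] \<open>M \<noteq> N\<close> by blast
  qed
  ultimately have "\<one> \<in> M <+>\<^bsub>R\<^esub> N"
    by simp
  then show ?thesis
    unfolding set_add_def' by blast
qed

lemma baire_one_compose:
  assumes u: "u \<in> baire_one X" and \<phi>: "continuous_on UNIV \<phi>"
  shows "(\<lambda>x. if x \<in> topspace X then \<phi> (u x) else 0) \<in> baire_one X"
proof -
  obtain g where g: "\<And>n. continuous_map X euclideanreal (g n)"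
    "\<And>x. x \<in> topspace X \<Longrightarrow> (\<lambda>n. g n x) \<longlonglongrightarrow> u x"
    using u unfolding baire_one_def by blast
  have "continuous_map X euclideanreal (\<phi> \<circ> g n)" for n
    using continuous_map_compose[OF g(1)] \<phi>
    by (metis continuous_map_iff_continuous2)
  moreover have "(\<lambda>n. (\<phi> \<circ> g n) x) \<longlonglongrightarrow> \<phi> (u x)" if "x \<in> topspace X" for x
    using continuous_on_tendsto_compose[OF \<phi> g(2)[OF that]] by (simp add: o_def)
  ultimately show ?thesis
    unfolding baire_one_def by (intro CollectI conjI exI[of _ "\<lambda>n. \<phi> \<circ> g n"]) auto
qed

lemma B1_ideal_bounded_below_eq_carrier:
  assumes I: "ideal I (B1_ring X)" and "h \<in> I" "c > 0"
    and bound: "\<And>x. x \<in> topspace X \<Longrightarrow> c \<le> h x"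
  shows "I = carrier (B1_ring X)"
proof -
  interpret ideal I "B1_ring X" by (rule I)
  have h: "h \<in> baire_one X"
    using Icarr[OF \<open>h \<in> I\<close>] by (simp add: B1_ring_def)
  define k where "k = (\<lambda>x. if x \<in> topspace X then 1 / max (h x) c else 0)"
  have "continuous_on UNIV (\<lambda>t. 1 / max t c)"
    using \<open>c > 0\<close> by (intro continuous_intros) auto
  then have "k \<in> carrier (B1_ring X)"
    unfolding k_def using baire_one_compose[OF h] by (simp add: B1_ring_def)
  moreover have "k \<otimes>\<^bsub>B1_ring X\<^esub> h = \<one>\<^bsub>B1_ring X\<^esub>"
    using bound \<open>c > 0\<close> by (force simp: B1_ring_def k_def fun_eq_iff max_def)
  ultimately have "\<one>\<^bsub>B1_ring X\<^esub> \<in> I"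
    using I_l_closed \<open>h \<in> I\<close> by metis
  then show ?thesis
    by (rule one_imp_carrier)
qed

lemma square_plus_cutoff_ge:
  fixes u :: real
  shows "1/9 \<le> u * u + max 0 (1/3 - u)"
proof (cases "u \<le> 1/3")
  case True
  have "0 \<le> (1/3 - u) * (2/3 - u)"
    using True by simp
  moreover have "(1/3 - u) * (2/3 - u) = u * u + (1/3 - u) - 1/9"
    by (simp add: field_simps)
  ultimately show ?thesis
    using True by simp
next
  case False
  then have "(1/3) * (1/3) \<le> u * u"
    by (intro mult_mono) auto
  then show ?thesis
    by (simp add: max_def)
qed

lemma B1_proper_ideal_excludes_cutoff:
  assumes I: "ideal I (B1_ring X)" "I \<noteq> carrier (B1_ring X)" and "u \<in> I"
  shows "(\<lambda>x. if x \<in> topspace X then max 0 (1/3 - u x) else 0) \<notin> I"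
    (is "?f \<notin> I")
proof
  interpret ideal I "B1_ring X" by (rule I(1))
  assume "?f \<in> I"
  moreover have "u \<otimes>\<^bsub>B1_ring X\<^esub> u \<in> I"
    using I_l_closed Icarr \<open>u \<in> I\<close> by blast
  ultimately have h: "(u \<otimes>\<^bsub>B1_ring X\<^esub> u) \<oplus>\<^bsub>B1_ring X\<^esub> ?f \<in> I"
    by (simp add: a_closed)
  have "1/9 \<le> ((u \<otimes>\<^bsub>B1_ring X\<^esub> u) \<oplus>\<^bsub>B1_ring X\<^esub> ?f) x" if "x \<in> topspace X" for x
    using that square_plus_cutoff_ge[of "u x"] by (simp add: B1_ring_def)
  then have "I = carrier (B1_ring X)"
    by (intro B1_ideal_bounded_below_eq_carrier[OF I(1) h, of "1/9"]) auto
  with I(2) show False ..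
qed

lemma B1_primeideal_in_unique_maximalideal:
  assumes P: "primeideal P (B1_ring X)"
    and M: "maximalideal M (B1_ring X)" "P \<subseteq> M"
    and N: "maximalideal N (B1_ring X)" "P \<subseteq> N"
  shows "M = N"
proof (rule ccontr)
  let ?R = "B1_ring X"
  interpret primeideal P ?R by (rule P)
  assume "M \<noteq> N"
  then obtain u v where uv: "u \<in> M" "v \<in> N" "\<one>\<^bsub>?R\<^esub> = u \<oplus>\<^bsub>?R\<^esub> v"
    using distinct_maximalideals_comaximal[OF M(1) N(1)] by blast
  have ideals: "ideal M ?R" "ideal N ?R"
    using M(1) N(1) maximalideal.axioms(1) by blast+
  have proper: "M \<noteq> carrier ?R" "N \<noteq> carrier ?R"
    using M(1) N(1) maximalideal.I_notcarr by metis+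
  define f where "f = (\<lambda>x. if x \<in> topspace X then max 0 (1/3 - u x) else 0)"
  define g where "g = (\<lambda>x. if x \<in> topspace X then max 0 (1/3 - v x) else 0)"
  have "u \<in> baire_one X" "v \<in> baire_one X"
    using uv(1,2) ideal.Icarr[OF ideals(1)] ideal.Icarr[OF ideals(2)] by (simp_all add: B1_ring_def)
  moreover have "continuous_on UNIV (\<lambda>t::real. max 0 (1/3 - t))"
    by (intro continuous_intros)
  ultimately have "f \<in> carrier ?R" "g \<in> carrier ?R"
    unfolding f_def g_def using baire_one_compose by (simp_all add: B1_ring_def)
  moreover have "f \<otimes>\<^bsub>?R\<^esub> g = \<zero>\<^bsub>?R\<^esub>"
  proof -
    have "u x + v x = 1" if "x \<in> topspace X" for x
      using fun_cong[OF uv(3), of x] that by (simp add: B1_ring_def)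
    then show ?thesis
      by (force simp: f_def g_def B1_ring_def fun_eq_iff max_def)
  qed
  ultimately have "f \<in> P \<or> g \<in> P"
    using I_prime by simp
  then show False
    using B1_proper_ideal_excludes_cutoff[OF ideals(1) proper(1) uv(1)]
      B1_proper_ideal_excludes_cutoff[OF ideals(2) proper(2) uv(2)] M(2) N(2)
    unfolding f_def g_def by blast
qed

theorem theorem2p17:
  fixes X :: "'a topology"
  shows "\<forall>P. primeideal P (B1_ring X) \<longrightarrow>
           (\<exists>!M. maximalideal M (B1_ring X) \<and> P \<subseteq> M)"
proof (intro allI impI)
  fix P assume P: "primeideal P (B1_ring X)"
  then interpret primeideal P "B1_ring X" .
  obtain M where "maximalideal M (B1_ring X)" "P \<subseteq> M"
    using exists_maximalideal_superset[OF is_ideal] I_notcarr by metis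
  then show "\<exists>!M. maximalideal M (B1_ring X) \<and> P \<subseteq> M"
    using B1_primeideal_in_unique_maximalideal[OF P] by blast
qed

end
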